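(* Let $p\ge2$ be an integer and let $G$ be a graph. If $G=H\cup I$ where $H$ is a subgraph of $G$ and $I$ is an induced subgraph of $G$ (so $V(G)=V(H)\cup V(I)$ and $E(G)=E(H)\cup E(I)$), then $\mathrm{id}^{\leq p}(G)\leq \mathrm{id}^{\leq p}(H)+\mathrm{id}^{\leq p}(I)$.
   Context: All graphs are finite and simple. For an oriented graph $D$ and $X\subseteq V(D)$, the inversion of $X$ reverses every arc with both endvertices in $X$; a $(\leq p)$-inversion is the inversion of a set of at most $p$ vertices. $\mathrm{id}^{\leq p}(G)$ is the maximum, over all ordered pairs $(\vec G_1,\vec G_2)$ of orientations of $G$, of the minimum number of $(\leq p)$-inversions transforming $\vec G_1$ into $\vec G_2$. *)

theory Defs
  imports Main
begin

definition graph :: "'a set \<Rightarrow> 'a set set \<Rightarrow> bool" where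
  "graph V E \<longleftrightarrow> finite V \<and> (\<forall>e\<in>E. e \<subseteq> V \<and> card e = 2)"

definition orientation :: "'a set \<Rightarrow> 'a set set \<Rightarrow> ('a \<times> 'a) set \<Rightarrow> bool" where
  "orientation V E A \<longleftrightarrow>
     (\<forall>(u,v)\<in>A. {u,v} \<in> E) \<and>
     (\<forall>u v. {u,v} \<in> E \<and> u \<noteq> v \<longrightarrow> ((u,v) \<in> A \<longleftrightarrow> (v,u) \<notin> A))"

definition invert :: "'a set \<Rightarrow> ('a \<times> 'a) set \<Rightarrow> ('a \<times> 'a) set" where
  "invert X A = {(u,v). (u,v) \<in> A \<and> \<not> (u \<in> X \<and> v \<in> X)}
              \<union> {(v,u) | u v. (u,v) \<in> A \<and> u \<in> X \<and> v \<in> X}"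

definition invert_seq :: "'a set list \<Rightarrow> ('a \<times> 'a) set \<Rightarrow> ('a \<times> 'a) set" where
  "invert_seq Xs A = foldl (\<lambda>B X. invert X B) A Xs"

definition inv_dist :: "nat \<Rightarrow> 'a set \<Rightarrow> ('a \<times> 'a) set \<Rightarrow> ('a \<times> 'a) set \<Rightarrow> nat" where
  "inv_dist p V A1 A2 = (LEAST k. \<exists>Xs. length Xs = k \<and>
      (\<forall>X\<in>set Xs. X \<subseteq> V \<and> card X \<le> p) \<and> invert_seq Xs A1 = A2)"

definition id_le :: "nat \<Rightarrow> 'a set \<Rightarrow> 'a set set \<Rightarrow> nat" where
  "id_le p V E = Max {inv_dist p V A1 A2 | A1 A2. orientation V E A1 \<and> orientation V E A2}"

end

theory Submission
  imports Defs
begin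

text \<open>Take shortest inversion sequences \<open>Xs\<close> for \<open>H\<close> and \<open>Ys\<close> for \<open>I\<close>, run \<open>Xs\<close> first and
  \<open>Ys\<close> afterwards. After \<open>Xs\<close> every edge of \<open>H\<close> has its target direction; \<open>Ys\<close> then repairs
  the edges of \<open>I\<close>, and since \<open>I\<close> is induced, an edge not in \<open>I\<close> never has both ends in \<open>V(I)\<close>,
  so \<open>Ys\<close> leaves the already repaired edges of \<open>H\<close> untouched.\<close>

definition arcs_on :: "'a set set \<Rightarrow> ('a \<times> 'a) set \<Rightarrow> ('a \<times> 'a) set" where
  "arcs_on F A = {(u,v). (u,v) \<in> A \<and> {u,v} \<in> F}"

lemma arcs_on_Un: "arcs_on (F \<union> G) A = arcs_on F A \<union> arcs_on G A"
  unfolding arcs_on_def by auto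

lemma arcs_on_arcs_on: "F \<subseteq> G \<Longrightarrow> arcs_on F (arcs_on G A) = arcs_on F A"
  unfolding arcs_on_def by auto

lemma arcs_on_invert: "arcs_on F (invert X A) = invert X (arcs_on F A)"
  unfolding arcs_on_def invert_def by (auto simp: insert_commute)

lemma arcs_on_invert_outside:
  "\<forall>e\<in>F. \<not> e \<subseteq> X \<Longrightarrow> arcs_on F (invert X A) = arcs_on F A"
  unfolding arcs_on_def invert_def by (auto simp: insert_commute)

lemma orientation_arcs_on: "orientation V E A \<Longrightarrow> F \<subseteq> E \<Longrightarrow> orientation W F (arcs_on F A)"
  unfolding orientation_def arcs_on_def by (auto simp: insert_commute)

lemma arcs_on_orientation: "orientation V E A \<Longrightarrow> arcs_on E A = A"
  unfolding orientation_def arcs_on_def by auto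

lemma orientation_invert: "orientation V E A \<Longrightarrow> orientation V E (invert X A)"
  unfolding orientation_def invert_def by (auto simp: insert_commute)

lemma invert_seq_Nil [simp]: "invert_seq [] A = A"
  unfolding invert_seq_def by simp

lemma invert_seq_snoc [simp]: "invert_seq (Xs @ [X]) A = invert X (invert_seq Xs A)"
  unfolding invert_seq_def by simp

lemma invert_seq_append: "invert_seq (Xs @ Ys) A = invert_seq Ys (invert_seq Xs A)"
  unfolding invert_seq_def by simp

lemma arcs_on_invert_seq: "arcs_on F (invert_seq Xs A) = invert_seq Xs (arcs_on F A)"
  by (induction Xs rule: rev_induct) (simp_all add: arcs_on_invert)

lemma arcs_on_invert_seq_outside:
  "\<forall>X\<in>set Xs. \<forall>e\<in>F. \<not> e \<subseteq> X \<Longrightarrow> arcs_on F (invert_seq Xs A) = arcs_on F A"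
  by (induction Xs rule: rev_induct) (simp_all add: arcs_on_invert_outside)

lemma orientation_invert_seq: "orientation V E A \<Longrightarrow> orientation V E (invert_seq Xs A)"
  by (induction Xs rule: rev_induct) (simp_all add: orientation_invert)

lemma mem_invert_seq_iff:
  "(u,v) \<in> invert_seq Xs A \<longleftrightarrow>
     (if odd (length (filter (\<lambda>X. u \<in> X \<and> v \<in> X) Xs)) then (v,u) \<in> A else (u,v) \<in> A)"
proof (induction Xs arbitrary: u v rule: rev_induct)
  case Nil
  then show ?case by simp
next
  case (snoc X Xs)
  have "(\<lambda>X. v \<in> X \<and> u \<in> X) = (\<lambda>X. u \<in> X \<and> v \<in> X)" by auto
  then show ?case by (auto simp: invert_def snoc.IH)
qed

lemma orientation_exists: "graph V E \<Longrightarrow> \<exists>A. orientation V E A"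
proof -
  assume g: "graph V E"
  then obtain f :: "'a \<Rightarrow> nat" and n where f: "inj_on f V"
    using finite_imp_inj_to_nat_seg by (metis graph_def)
  have "orientation V E {(u,v). {u,v} \<in> E \<and> f u < f v}"
    unfolding orientation_def
  proof (intro conjI allI impI)
    fix u v
    assume uv: "{u,v} \<in> E \<and> u \<noteq> v"
    with g have "u \<in> V" "v \<in> V" by (auto simp: graph_def)
    with uv f have "f u \<noteq> f v" by (auto dest: inj_onD)
    with uv show "((u,v) \<in> {(u,v). {u,v} \<in> E \<and> f u < f v}) =
                  ((v,u) \<notin> {(u,v). {u,v} \<in> E \<and> f u < f v})"
      by (auto simp: insert_commute)
  qed auto
  then show ?thesis by blast
qed

lemma finite_inv_dists:
  assumes "graph V E"
  shows "finite {inv_dist p V A1 A2 | A1 A2. orientation V E A1 \<and> orientation V E A2}"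
proof -
  have "{A. orientation V E A} \<subseteq> Pow (V \<times> V)"
    using assms unfolding graph_def orientation_def by fastforce
  moreover have "finite (Pow (V \<times> V))" using assms by (simp add: graph_def)
  ultimately have "finite {A. orientation V E A}" by (rule finite_subset)
  then have "finite ((\<lambda>(A1,A2). inv_dist p V A1 A2) ` ({A. orientation V E A} \<times> {A. orientation V E A}))"
    by blast
  moreover have "{inv_dist p V A1 A2 | A1 A2. orientation V E A1 \<and> orientation V E A2}
      \<subseteq> (\<lambda>(A1,A2). inv_dist p V A1 A2) ` ({A. orientation V E A} \<times> {A. orientation V E A})"
    by auto
  ultimately show ?thesis by (rule finite_subset[rotated])
qed

definition flipped_edges :: "'a set set \<Rightarrow> ('a \<times> 'a) set \<Rightarrow> ('a \<times> 'a) set \<Rightarrow> 'a set set" where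
  "flipped_edges E A1 A2 = {e \<in> E. \<exists>u v. e = {u,v} \<and> (u,v) \<in> A1 \<and> (v,u) \<in> A2}"

lemma flipped_edges_subset: "flipped_edges E A1 A2 \<subseteq> E"
  unfolding flipped_edges_def by blast

lemma mem_flipped_edges_iff:
  "a \<noteq> b \<Longrightarrow> {a,b} \<in> flipped_edges E A1 A2 \<longleftrightarrow>
     {a,b} \<in> E \<and> ((a,b) \<in> A1 \<and> (b,a) \<in> A2 \<or> (b,a) \<in> A1 \<and> (a,b) \<in> A2)"
  by (auto simp: flipped_edges_def doubleton_eq_iff)

lemma mem_orientation_iff_flipped:
  assumes g: "graph V E" and o1: "orientation V E A1" and o2: "orientation V E A2"
  shows "(a,b) \<in> A2 \<longleftrightarrow> (if {a,b} \<in> flipped_edges E A1 A2 then (b,a) \<in> A1 else (a,b) \<in> A1)"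
proof (cases "a \<noteq> b \<and> {a,b} \<in> E")
  case True
  then have "(a,b) \<in> A1 \<longleftrightarrow> (b,a) \<notin> A1" "(a,b) \<in> A2 \<longleftrightarrow> (b,a) \<notin> A2"
    using o1 o2 by (auto simp: orientation_def)
  with True show ?thesis by (auto simp: mem_flipped_edges_iff)
next
  case False
  with g have "{a,b} \<notin> E" by (auto simp: graph_def)
  with o1 o2 show ?thesis by (auto simp: orientation_def flipped_edges_def)
qed

lemma card_two_edge_eq: "card e = 2 \<Longrightarrow> a \<in> e \<Longrightarrow> b \<in> e \<Longrightarrow> a \<noteq> b \<Longrightarrow> e = {a,b}"
  by (auto simp: card_2_iff)

lemma length_filter_edges:
  assumes "\<forall>e\<in>set es. card e = 2" and "distinct es" and "a \<noteq> b"
  shows "length (filter (\<lambda>e. a \<in> e \<and> b \<in> e) es) = (if {a,b} \<in> set es then 1 else 0)"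
proof -
  have "e = {a,b}" if "e \<in> set es" "a \<in> e" "b \<in> e" for e
    using that assms(1,3) by (metis card_two_edge_eq)
  then have "{e. a \<in> e \<and> b \<in> e} \<inter> set es = {{a,b}} \<inter> set es"
    by auto
  then show ?thesis
    using assms(2) by (simp add: distinct_length_filter)
qed

text \<open>Inverting every flipped edge once, as a 2-set, does it. This is the only place where
  \<open>p \<ge> 2\<close> is needed: without such a sequence the \<open>LEAST\<close> in \<open>inv_dist\<close> is not attained.\<close>
lemma inversion_seq_exists:
  assumes g: "graph V E" and p: "p \<ge> 2"
    and o1: "orientation V E A1" and o2: "orientation V E A2"
  shows "\<exists>Xs. (\<forall>X\<in>set Xs. X \<subseteq> V \<and> card X \<le> p) \<and> invert_seq Xs A1 = A2"
proof -
  have "E \<subseteq> Pow V" "finite V" using g by (auto simp: graph_def)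
  then have "finite (flipped_edges E A1 A2)"
    by (meson finite_Pow_iff finite_subset flipped_edges_subset)
  then obtain es where es: "set es = flipped_edges E A1 A2" "distinct es"
    using finite_distinct_list by blast
  then have es_E: "set es \<subseteq> E" using flipped_edges_subset by blast
  have "(a,b) \<in> invert_seq es A1 \<longleftrightarrow> (a,b) \<in> A2" for a b
  proof (cases "a = b")
    case True
    then show ?thesis
      using mem_orientation_iff_flipped[OF g o1 o2, of a b] by (simp add: mem_invert_seq_iff)
  next
    case False
    have "\<forall>e\<in>set es. card e = 2" using es_E g by (auto simp: graph_def)
    with False es have "odd (length (filter (\<lambda>X. a \<in> X \<and> b \<in> X) es)) \<longleftrightarrow>
        {a,b} \<in> flipped_edges E A1 A2"
      by (simp add: length_filter_edges)
    then show ?thesis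
      using mem_orientation_iff_flipped[OF g o1 o2, of a b] by (simp add: mem_invert_seq_iff)
  qed
  then have "invert_seq es A1 = A2" by auto
  moreover have "\<forall>X\<in>set es. X \<subseteq> V \<and> card X \<le> p"
    using es_E g p by (auto simp: graph_def)
  ultimately show ?thesis by blast
qed

lemma inv_dist_le:
  "\<forall>X\<in>set Xs. X \<subseteq> V \<and> card X \<le> p \<Longrightarrow> invert_seq Xs A1 = A2 \<Longrightarrow> inv_dist p V A1 A2 \<le> length Xs"
  unfolding inv_dist_def by (rule Least_le) blast

lemma inv_dist_le_id_le:
  "graph V E \<Longrightarrow> orientation V E A1 \<Longrightarrow> orientation V E A2 \<Longrightarrow> inv_dist p V A1 A2 \<le> id_le p V E"
  unfolding id_le_def by (rule Max_ge[OF finite_inv_dists]) blast+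

lemma id_le_leI:
  assumes "graph V E"
    and "\<And>A1 A2. orientation V E A1 \<Longrightarrow> orientation V E A2 \<Longrightarrow> inv_dist p V A1 A2 \<le> k"
  shows "id_le p V E \<le> k"
  unfolding id_le_def
  using assms orientation_exists[OF assms(1)] by (intro Max.boundedI finite_inv_dists) blast+

lemma short_inversion_seq_exists:
  assumes "graph V E" and "p \<ge> 2" and "orientation V E A1" and "orientation V E A2"
  obtains Xs where "length Xs \<le> id_le p V E" and "\<forall>X\<in>set Xs. X \<subseteq> V \<and> card X \<le> p"
    and "invert_seq Xs A1 = A2"
proof -
  let ?P = "\<lambda>k. \<exists>Xs. length Xs = k \<and> (\<forall>X\<in>set Xs. X \<subseteq> V \<and> card X \<le> p) \<and> invert_seq Xs A1 = A2"
  obtain Ys where "\<forall>X\<in>set Ys. X \<subseteq> V \<and> card X \<le> p" and "invert_seq Ys A1 = A2"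
    using inversion_seq_exists[OF assms] by blast
  then have "?P (length Ys)" by blast
  then have "?P (Least ?P)" by (rule LeastI)
  then obtain Xs where "length Xs = inv_dist p V A1 A2"
      and "\<forall>X\<in>set Xs. X \<subseteq> V \<and> card X \<le> p" and "invert_seq Xs A1 = A2"
    unfolding inv_dist_def by blast
  with inv_dist_le_id_le[OF assms(1,3,4)] show ?thesis
    by (intro that[of Xs]) simp_all
qed

lemma invert_seq_two_phases:
  assumes o1: "orientation V E A1" and o2: "orientation V E A2"
    and E: "E = EH \<union> EI" and outside: "\<forall>e\<in>EH - EI. \<not> e \<subseteq> VI"
    and Xs: "invert_seq Xs (arcs_on EH A1) = arcs_on EH A2"
    and Ys: "\<forall>Y\<in>set Ys. Y \<subseteq> VI" "invert_seq Ys (arcs_on EI (invert_seq Xs A1)) = arcs_on EI A2"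
  shows "invert_seq (Xs @ Ys) A1 = A2"
proof -
  define B where "B = invert_seq (Xs @ Ys) A1"
  have "arcs_on EI B = arcs_on EI A2"
    using Ys(2) by (simp add: B_def invert_seq_append arcs_on_invert_seq)
  moreover have "arcs_on (EH - EI) B = arcs_on (EH - EI) A2"
  proof -
    have "\<forall>Y\<in>set Ys. \<forall>e\<in>EH - EI. \<not> e \<subseteq> Y" using outside Ys(1) by blast
    then have "arcs_on (EH - EI) B = arcs_on (EH - EI) (invert_seq Xs A1)"
      unfolding B_def invert_seq_append by (rule arcs_on_invert_seq_outside)
    also have "\<dots> = arcs_on (EH - EI) (arcs_on EH (invert_seq Xs A1))"
      by (simp add: arcs_on_arcs_on)
    also have "\<dots> = arcs_on (EH - EI) A2"
      using Xs by (simp add: arcs_on_invert_seq arcs_on_arcs_on)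
    finally show ?thesis .
  qed
  moreover have "E = (EH - EI) \<union> EI" using E by blast
  moreover have "B = arcs_on E B"
    unfolding B_def by (rule arcs_on_orientation[OF orientation_invert_seq[OF o1], symmetric])
  ultimately have "B = arcs_on E A2" by (metis arcs_on_Un)
  then show ?thesis using arcs_on_orientation[OF o2] by (simp add: B_def)
qed

theorem mainTheorem12:
  fixes p :: nat and V VH VI :: "'a set" and E EH EI :: "'a set set"
  assumes "p \<ge> 2"
    and "graph V E"
    and "graph VH EH" and "VH \<subseteq> V" and "EH \<subseteq> E"
    and "VI \<subseteq> V" and "EI = {e \<in> E. e \<subseteq> VI}"
    and "V = VH \<union> VI" and "E = EH \<union> EI"
  shows "id_le p V E \<le> id_le p VH EH + id_le p VI EI"
proof (rule id_le_leI[OF assms(2)])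
  have gI: "graph VI EI" using assms(2,6,7) finite_subset by (auto simp: graph_def)
  fix A1 A2
  assume o1: "orientation V E A1" and o2: "orientation V E A2"
  obtain Xs where Xs: "length Xs \<le> id_le p VH EH" "\<forall>X\<in>set Xs. X \<subseteq> VH \<and> card X \<le> p"
      "invert_seq Xs (arcs_on EH A1) = arcs_on EH A2"
    using short_inversion_seq_exists[OF assms(3,1)] orientation_arcs_on assms(5) o1 o2 by metis
  have "EI \<subseteq> E" using assms(7) by blast
  then obtain Ys where Ys: "length Ys \<le> id_le p VI EI" "\<forall>Y\<in>set Ys. Y \<subseteq> VI \<and> card Y \<le> p"
      "invert_seq Ys (arcs_on EI (invert_seq Xs A1)) = arcs_on EI A2"
    using short_inversion_seq_exists[OF gI assms(1)] orientation_arcs_on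
      orientation_invert_seq[OF o1] o2 by metis
  have "invert_seq (Xs @ Ys) A1 = A2"
    using invert_seq_two_phases[OF o1 o2 assms(9) _ Xs(3) _ Ys(3)] assms(7,9) Ys(2) by blast
  moreover have "\<forall>X\<in>set (Xs @ Ys). X \<subseteq> V \<and> card X \<le> p"
    unfolding set_append using Xs(2) Ys(2) assms(4,6) by blast
  ultimately have "inv_dist p V A1 A2 \<le> length (Xs @ Ys)" by (rule inv_dist_le[rotated])
  with Xs(1) Ys(1) show "inv_dist p V A1 A2 \<le> id_le p VH EH + id_le p VI EI" by simp
qed

end
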